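(* Let $b_1<b_2$ and $T\ge b_1+b_2$ be positive integers, write $T-b_1=pb_2+q$ with $p\ge1$ and $1\le q<b_2$, and let $k=T-b_1$. Over the $(b_1,T-b_2)$ burst erasure channel, the SR code (defined in the context) has the extended delay profile $$(\underbrace{pb_1+q,\dots,pb_1+q}_{b_2},\underbrace{pb_1,\dots,pb_1}_{q},\underbrace{(p-1)b_1,\dots,(p-1)b_1}_{b_2},\dots,\underbrace{2b_1,\dots,2b_1}_{b_2},\underbrace{b_1,\dots,b_1}_{b_2})$$ with combined symbols $c_j(t)=s_j[t]$ for all $j$, except that when $q<b_1$ and $j\in[b_2+q+1,2b_2+q]$ the combined symbol is $c_j(t)=s_j[t]+m_j(t)$ with $$m_j(t)=\sum_{\ell\in[b_1-1]:\ q+(\ell\bmod(b_1-q))=j-b_2-q} s_{b_2+(\ell\bmod q)}[t-\ell].$$ In particular the profile is extended delay separable with $A_D=[b_2+q+1,2b_2+q]\cap[k]$ and $A_I=[k]\setminus A_D$ (every $m_j(t)$ involves only symbols $s_{j'}[t']$ with $j'\in[b_2+1,b_2+q]\subseteq A_I$ and $t'<t$).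
   Context: Convention: $m\bmod n$ denotes the representative of $m$ modulo $n$ in $\{1,\dots,n\}$. Point-to-point code: given $P_0,\dots,P_M\in\mathbb F^{k\times(n-k)}$ ($P_i=0$ for $i\notin[0,M]$), messages $S[t]=(s_1[t],\dots,s_k[t])\in\mathbb F^k$ ($S[t]=0$ for $t<0$) are sent as $(S[t],P[t])$, $P[t]=\sum_{i=0}^M S[t-i]P_i$; a $(b,M)$ burst channel erases packets so that in every window of $M+1$ consecutive slots the erased slots form at most one run of consecutive slots of length at most $b$. Extended delay profile: given for each $i\in[k]$, $t\in\mathbb N$ a linear combination $m_i(t)$ of symbols $s_j[t']$ with $t'<t$, the code has extended delay profile $(t_1,\dots,t_k)$ with combined symbols $s_i[t]+m_i(t)$ if, for every admissible erasure pattern and all $t,i$, the value $s_i[t]+m_i(t)$ is determined by the packets received at times $\le t+t_i$. It is extended delay separable with partition $[k]=A_I\sqcup A_D$ if $m_i\equiv0$ for $i\in A_I$ and, for $i\in A_D$, $m_i(t)$ is a linear combination of symbols $s_j[t-d]$ with $d>0$, $j\in A_I$. SR code (memory $M=T-b_2$, $k=T-b_1$, $n-k=b_2$): $P_i\in\mathbb F_2^{k\times b_2}$, $i\in[0,T-b_2]$: (i) for $j\in[p-1]$, $P_{jb_1}$ has $I_{b_2}$ in rows $(p-j)b_2+q+1,\dots,(p-j+1)b_2+q$, zeros elsewhere; (ii) for $j\in[b_1-1]$, $P_{(p-1)b_1+j}=0$ if $q\ge b_1$, and if $q<b_1$ it has a single $1$ at position $(b_2+(j\bmod q),\,q+(j\bmod(b_1-q)))$;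 (iii) $P_{pb_1}(b_2+r,r)=1$ for $r\in[q]$, zeros elsewhere; (iv) $P_{pb_1+q}$ has $I_{b_2}$ in rows $1,\dots,b_2$, zeros elsewhere; all other $P_i=0$. *)

theory Defs
  imports Main "HOL-Library.Z2"
begin

(* Times are integers; a message sequence S :: int => nat => bit gives S t j = s_j[t]
   (symbol indices j in [k] = {1..k}).  Coding matrices P :: nat => nat => nat => bit,
   P i r c = entry (r,c) of P_i (rows 1..k, columns 1..n-k). *)

type_synonym msgs = "int \<Rightarrow> nat \<Rightarrow> bit"

definition zero_neg :: "msgs \<Rightarrow> bool" where
  "zero_neg S \<longleftrightarrow> (\<forall>t<0. \<forall>j. S t j = 0)"

definition modn :: "nat \<Rightarrow> nat \<Rightarrow> nat" where
  "modn m n = (if m mod n = 0 then n else m mod n)"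

definition parity :: "(nat \<Rightarrow> nat \<Rightarrow> nat \<Rightarrow> bit) \<Rightarrow> nat \<Rightarrow> nat \<Rightarrow> msgs \<Rightarrow> int \<Rightarrow> nat \<Rightarrow> bit" where
  "parity P M k S t c = (\<Sum>i\<in>{0..M}. \<Sum>r\<in>{1..k}. S (t - int i) r * P i r c)"

(* (b,M) burst erasure pattern: E = set of erased slots; in every window of M+1
   consecutive slots the erased slots form at most one run of length at most b *)
definition burst_admissible :: "nat \<Rightarrow> nat \<Rightarrow> int set \<Rightarrow> bool" where
  "burst_admissible b M E \<longleftrightarrow>
     (\<forall>w::int. E \<inter> {w..w + int M} = {} \<or>
        (\<exists>a::int. \<exists>l::nat. 1 \<le> l \<and> l \<le> b \<and> E \<inter> {w..w + int M} = {a..a + int l - 1}))"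

definition lin_comb_of :: "(msgs \<Rightarrow> bit) \<Rightarrow> nat set \<Rightarrow> int \<Rightarrow> bool" where
  "lin_comb_of f A t \<longleftrightarrow>
     (\<exists>c :: nat \<Rightarrow> nat \<Rightarrow> bit. \<forall>S. zero_neg S \<longrightarrow>
        f S = (\<Sum>d\<in>{1..nat t}. \<Sum>j\<in>A. c j d * S (t - int d) j))"

(* Extended delay profile (t_1..t_k) with combined symbols s_i[t] + m S i t, for the
   point-to-point code with matrices P_0..P_M (n-k = r parity columns) over the (b,M)
   burst channel *)
definition has_ext_delay_profile ::
  "(nat \<Rightarrow> nat \<Rightarrow> nat \<Rightarrow> bit) \<Rightarrow> nat \<Rightarrow> nat \<Rightarrow> nat \<Rightarrow> nat \<Rightarrow> (nat \<Rightarrow> nat)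
     \<Rightarrow> (msgs \<Rightarrow> nat \<Rightarrow> int \<Rightarrow> bit) \<Rightarrow> bool" where
  "has_ext_delay_profile P M k r b del m \<longleftrightarrow>
     (\<forall>i\<in>{1..k}. \<forall>t\<ge>0. lin_comb_of (\<lambda>S. m S i t) {1..k} t) \<and>
     (\<forall>E. burst_admissible b M E \<longrightarrow>
       (\<forall>t\<ge>0. \<forall>i\<in>{1..k}. \<forall>S S'. zero_neg S \<longrightarrow> zero_neg S' \<longrightarrow>
          (\<forall>\<tau>\<in>{0..t + int (del i)} - E.
              (\<forall>j\<in>{1..k}. S \<tau> j = S' \<tau> j) \<and>
              (\<forall>c\<in>{1..r}. parity P M k S \<tau> c = parity P M k S' \<tau> c)) \<longrightarrow>
          S t i + m S i t = S' t i + m S' i t))"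

definition ext_delay_separable :: "nat \<Rightarrow> nat set \<Rightarrow> nat set \<Rightarrow> (msgs \<Rightarrow> nat \<Rightarrow> int \<Rightarrow> bit) \<Rightarrow> bool" where
  "ext_delay_separable k AI AD m \<longleftrightarrow>
     AI \<inter> AD = {} \<and> AI \<union> AD = {1..k} \<and>
     (\<forall>i\<in>AI. \<forall>t\<ge>0. \<forall>S. zero_neg S \<longrightarrow> m S i t = 0) \<and>
     (\<forall>i\<in>AD. \<forall>t\<ge>0. lin_comb_of (\<lambda>S. m S i t) AI t)"

(* The four index families j*b1 (j in [p-1]), (p-1)*b1+j (j in [b1-1]), p*b1, p*b1+q
   are pairwise distinct, so the case description is a disjunction. *)
definition SR_P :: "nat \<Rightarrow> nat \<Rightarrow> nat \<Rightarrow> nat \<Rightarrow> nat \<Rightarrow> nat \<Rightarrow> nat \<Rightarrow> bit" where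
  "SR_P b1 b2 p q i r c = (if
      (\<exists>j\<in>{1..p-1}. i = j * b1 \<and> 1 \<le> c \<and> c \<le> b2 \<and> r = (p - j) * b2 + q + c)
    \<or> (q < b1 \<and> (\<exists>j\<in>{1..b1-1}. i = (p - 1) * b1 + j \<and>
                   r = b2 + modn j q \<and> c = q + modn j (b1 - q)))
    \<or> (i = p * b1 \<and> 1 \<le> c \<and> c \<le> q \<and> r = b2 + c)
    \<or> (i = p * b1 + q \<and> 1 \<le> c \<and> c \<le> b2 \<and> r = c)
    then 1 else 0)"

definition SR_delay :: "nat \<Rightarrow> nat \<Rightarrow> nat \<Rightarrow> nat \<Rightarrow> nat \<Rightarrow> nat" where
  "SR_delay b1 b2 p q i =
     (if i \<le> b2 then p * b1 + q
      else if i \<le> b2 + q then p * b1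
      else (p - (i - b2 - q - 1) div b2 - 1) * b1)"

definition SR_m :: "nat \<Rightarrow> nat \<Rightarrow> nat \<Rightarrow> msgs \<Rightarrow> nat \<Rightarrow> int \<Rightarrow> bit" where
  "SR_m b1 b2 q S j t =
     (if q < b1 \<and> b2 + q + 1 \<le> j \<and> j \<le> 2 * b2 + q then
        (\<Sum>l\<in>{l\<in>{1..b1-1}. q + modn l (b1 - q) = j - b2 - q}. S (t - int l) (b2 + modn l q))
      else 0)"

end

theory Submission
  imports Defs
begin

(* Over F_2 two message sequences with the same received data differ by a sequence D whose
   received symbols and parities vanish, so it suffices to show D_i[t] + m_i(t) = 0.  Within
   the decoding window an admissible erasure pattern is one burst [a, a + b1), and each erased
   symbol is isolated in a parity column received after the burst whose other summands are
   received or recovered earlier: symbols b2+1..b2+q via P_{p b1} (early in the burst) or via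
   the mixing matrices P_{(p-1) b1 + l} (later), symbols 1..b2 via P_{p b1 + q}, and the j-th
   further block of b2 symbols via P_{j b1}.  For the last block (j = p - 1) that column also
   contains the symbols s_{b2+r}[t - l] mixed in by P_{(p-1) b1 + l}, which need not be
   recoverable within delay (p - 1) b1; hence only s_j[t] + m_j(t) is. *)

lemma bit_add_eq_0_iff: "(a::bit) + b = 0 \<longleftrightarrow> a = b"
  by (cases a; cases b) auto

lemma modn_bounds: "0 < n \<Longrightarrow> modn m n \<in> {1..n}"
  by (auto simp: modn_def)

lemma modn_mod: "0 < n \<Longrightarrow> modn m n mod n = m mod n"
  by (auto simp: modn_def)

lemma modn_eqI: "r \<in> {1..n} \<Longrightarrow> m mod n = r mod n \<Longrightarrow> modn m n = r"
  by (cases "r = n") (auto simp: modn_def)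

lemma modn_eq_modn_imp_mod_eq: "0 < n \<Longrightarrow> modn x n = modn y n \<Longrightarrow> x mod n = y mod n"
  by (metis modn_mod)

lemma mod_eq_less_imp_add_le:
  fixes x y n :: nat
  assumes "x mod n = y mod n" and "x < y"
  shows "x + n \<le> y"
proof -
  have "n dvd y - x"
    using mod_eq_dvd_iff_nat[of x y n] assms by simp
  then show ?thesis
    using assms by (cases "n = 0") (auto dest: dvd_imp_le)
qed

lemma ex_mod_eq_in_interval:
  fixes q s r :: nat
  assumes "0 < q"
  shows "\<exists>l\<in>{s..<s + q}. l mod q = r mod q"
proof -
  define l where "l = s + (r + q - s mod q) mod q"
  have "l mod q = (s + (r + q - s mod q)) mod q"
    unfolding l_def by (simp add: mod_add_right_eq)
  also have "s + (r + q - s mod q) = (s - s mod q) + (r + q)"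
    using mod_less_divisor[OF assms, of s] mod_le_divisor[OF assms, of s] by (simp add: le_add_diff_inverse)
  also have "((s - s mod q) + (r + q)) mod q = r mod q"
    by (simp add: minus_mod_eq_mult_div)
  finally have "l mod q = r mod q" .
  moreover have "l \<in> {s..<s + q}"
    unfolding l_def using assms by simp
  ultimately show ?thesis by blast
qed

lemma int_mult_less_gap: "(i::nat) < j \<Longrightarrow> int (i * b) + int b \<le> int (j * b)"
proof -
  assume "i < j"
  then have "(i + 1) * b \<le> j * b"
    by (intro mult_le_mono1) simp
  then show ?thesis
    by (simp only: of_nat_add[symmetric] of_nat_le_iff add_mult_distrib mult_1)
qed

lemma int_le_int_mult: "1 \<le> j \<Longrightarrow> int b \<le> int (j * b)"
  by (simp only: of_nat_le_iff) simp

lemma burst_admissible_interval: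
  assumes adm: "burst_admissible b M E" and "x \<in> E" "y \<in> E" "x \<le> y" "y - x \<le> int M"
  shows "{x..y} \<subseteq> E" and "y - x < int b"
proof -
  have "x \<in> E \<inter> {x..x + int M}"
    using assms(2) by simp
  then obtain a l where "l \<le> b" and run: "E \<inter> {x..x + int M} = {a..a + int l - 1}"
    using adm[unfolded burst_admissible_def, rule_format, of x] by auto
  have "x \<in> {a..a + int l - 1}" "y \<in> {a..a + int l - 1}"
    using run assms by (simp_all add: run[symmetric])
  then have "{x..y} \<subseteq> E \<inter> {x..x + int M}"
    unfolding run by auto
  then show "{x..y} \<subseteq> E"
    by blast
  show "y - x < int b"
    using \<open>l \<le> b\<close> \<open>y \<in> {a..a + int l - 1}\<close> \<open>x \<in> {a..a + int l - 1}\<close> by simp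
qed

lemma burst_start_exists:
  assumes adm: "burst_admissible b M E" and "b \<le> M" and x: "x \<in> E" and "H - x \<le> int M"
  obtains a where "a \<le> x" "x < a + int b"
    "\<And>y. y \<in> E \<Longrightarrow> a - int M \<le> y \<Longrightarrow> y \<le> H \<Longrightarrow> a \<le> y \<and> y < a + int b"
proof -
  have "E \<inter> {x - int M..x} = {} \<or>
      (\<exists>a l. 1 \<le> l \<and> l \<le> b \<and> E \<inter> {x - int M..x} = {a..a + int l - 1})"
    using adm[unfolded burst_admissible_def, rule_format, of "x - int M"] by simp
  moreover have "x \<in> E \<inter> {x - int M..x}"
    using x by simp
  ultimately obtain a l where "l \<le> b" and run: "E \<inter> {x - int M..x} = {a..a + int l - 1}"
    by (metis empty_iff)
  have x_run: "x \<in> {a..a + int l - 1}"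
    using x by (simp add: run[symmetric])
  then have "a \<in> E \<inter> {x - int M..x}"
    unfolding run by simp
  then have aE: "a \<in> E" "x - int M \<le> a"
    by auto
  have ax: "a \<le> x" "x < a + int b"
    using x_run \<open>l \<le> b\<close> by auto
  have "a \<le> y \<and> y < a + int b" if y: "y \<in> E" "a - int M \<le> y" "y \<le> H" for y
  proof
    show "a \<le> y"
    proof (rule ccontr)
      assume "\<not> a \<le> y"
      have "{y..a} \<subseteq> E"
        using burst_admissible_interval(1)[OF adm y(1) aE(1)] \<open>\<not> a \<le> y\<close> y(2) by auto
      moreover have "{a..x} \<subseteq> E"
        using burst_admissible_interval(1)[OF adm aE(1) x] ax aE by auto
      ultimately have yx: "{y..x} \<subseteq> E"
        by (smt (verit) atLeastAtMost_iff subset_iff)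
      show False
      proof (cases "x - y \<le> int M")
        case True
        then have "y \<in> E \<inter> {x - int M..x}"
          using y \<open>\<not> a \<le> y\<close> ax by auto
        then show False
          using run \<open>\<not> a \<le> y\<close> by auto
      next
        case False
        then have "x - int b \<in> E"
          using yx \<open>b \<le> M\<close> by auto
        from burst_admissible_interval(2)[OF adm this x] show False
          using \<open>b \<le> M\<close> by simp
      qed
    qed
    show "y < a + int b"
    proof (rule ccontr)
      assume "\<not> y < a + int b"
      then have "{x..y} \<subseteq> E"
        using burst_admissible_interval(1)[OF adm x y(1)] ax y(3) assms(4) by auto
      then have "a + int b \<in> E"
        using ax \<open>\<not> y < a + int b\<close> by auto
      from burst_admissible_interval(2)[OF adm aE(1) this] show False
        using \<open>b \<le> M\<close> by simp
    qed
  qed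
  then show ?thesis
    using that ax by blast
qed

lemma parity_eq_sum_support:
  "parity P M k S \<tau> c = (\<Sum>(i, r) \<in> {(i, r) \<in> {0..M} \<times> {1..k}. P i r c = 1}. S (\<tau> - int i) r)"
proof -
  have "parity P M k S \<tau> c = (\<Sum>(i, r) \<in> {0..M} \<times> {1..k}. S (\<tau> - int i) r * P i r c)"
    unfolding parity_def sum.cartesian_product ..
  also have "\<dots> = (\<Sum>(i, r) \<in> {0..M} \<times> {1..k}. if P i r c = 1 then S (\<tau> - int i) r else 0)"
    by (intro sum.cong refl) (auto elim: bit.exhaust)
  also have "\<dots> = (\<Sum>(i, r) \<in> {(i, r) \<in> {0..M} \<times> {1..k}. P i r c = 1}. S (\<tau> - int i) r)"
    by (simp add: sum.inter_filter[symmetric] case_prod_unfold; intro sum.cong) auto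
  finally show ?thesis .
qed

lemma parity_add:
  "parity P M k (\<lambda>\<tau> j. S \<tau> j + S' \<tau> j) \<tau> c = parity P M k S \<tau> c + parity P M k S' \<tau> c"
  unfolding parity_def by (simp only: distrib_right sum.distrib)

lemma SR_m_add:
  "SR_m b1 b2 q (\<lambda>\<tau> j. S \<tau> j + S' \<tau> j) i t = SR_m b1 b2 q S i t + SR_m b1 b2 q S' i t"
proof (cases "q < b1 \<and> b2 + q + 1 \<le> i \<and> i \<le> 2 * b2 + q")
  case True
  then show ?thesis
    unfolding SR_m_def by (simp only: if_P sum.distrib)
next
  case False
  then show ?thesis
    unfolding SR_m_def by (simp only: if_not_P if_False add_0)
qed

lemma lin_comb_of_zero: "lin_comb_of (\<lambda>S. 0) A t"
  unfolding lin_comb_of_def by (intro exI[of _ "\<lambda>_ _. 0"]) simp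

lemma lin_comb_of_shift_sum:
  assumes "finite A" "finite L" and L: "\<And>d. d \<in> L \<Longrightarrow> 0 < d \<and> \<iota> d \<in> A"
    and f: "\<And>S. zero_neg S \<Longrightarrow> f S = (\<Sum>d \<in> L. S (t - int d) (\<iota> d))"
  shows "lin_comb_of f A t"
  unfolding lin_comb_of_def
proof (intro exI allI impI)
  fix S assume S: "zero_neg S"
  define g where "g d = S (t - int d) (\<iota> d)" for d
  have inner: "(\<Sum>j \<in> A. of_bool (d \<in> L \<and> j = \<iota> d) * S (t - int d) j) = (if d \<in> L then g d else 0)"
    for d
  proof (cases "d \<in> L")
    case True
    then have single: "A \<inter> {j. d \<in> L \<and> j = \<iota> d} = {\<iota> d}"
      using L by auto
    show ?thesis
      unfolding sum_of_bool_mult_eq[OF assms(1)] single using True by (simp add: g_def)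
  qed simp
  have "(\<Sum>d \<in> {1..nat t}. \<Sum>j \<in> A. of_bool (d \<in> L \<and> j = \<iota> d) * S (t - int d) j)
      = sum g ({1..nat t} \<inter> L)"
    by (simp only: inner sum.inter_restrict[symmetric] finite_atLeastAtMost)
  also have "\<dots> = sum g L"
  proof (rule sum.mono_neutral_left)
    show "\<forall>d \<in> L - {1..nat t} \<inter> L. g d = 0"
    proof
      fix d assume "d \<in> L - {1..nat t} \<inter> L"
      then have "t - int d < 0"
        using L[of d] by auto
      then show "g d = 0"
        using S unfolding g_def zero_neg_def by simp
    qed
  qed (use assms(2) in auto)
  finally show "f S = (\<Sum>d \<in> {1..nat t}. \<Sum>j \<in> A. of_bool (d \<in> L \<and> j = \<iota> d) * S (t - int d) j)"
    using f[OF S] unfolding g_def by simp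
qed

locale SR_code =
  fixes b1 b2 p q :: nat
  assumes b1_pos: "0 < b1" and b1_less_b2: "b1 < b2" and p_pos: "1 \<le> p"
    and q_pos: "1 \<le> q" and q_less_b2: "q < b2"
begin

(* With T - b1 = p b2 + q these are k = T - b1 and the memory T - b2.  Lemma names refer to the
   index groups U = {1..b2}, V = {b2+1..b2+q} and W = {b2+q+1..k}. *)
abbreviation k :: nat where "k \<equiv> p * b2 + q"

abbreviation M :: nat where "M \<equiv> (p - 1) * b2 + q + b1"

lemma p_b1_eq: "p * b1 = (p - 1) * b1 + b1"
  using p_pos by (cases p) auto

lemma p_b2_eq: "p * b2 = (p - 1) * b2 + b2"
  using p_pos by (cases p) auto

lemma b2_q_le_k: "b2 + q \<le> k"
  using p_b2_eq by linarith

lemma le_b2_q_imp_le_k: "i \<le> b2 + q \<Longrightarrow> i \<le> k"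
  using b2_q_le_k by linarith

lemma p_b1_q_le_M: "p * b1 + q \<le> M"
  using p_b1_eq mult_le_mono2[of b1 b2 "p - 1"] b1_less_b2 by linarith

lemma int_p_b1: "int (p * b1) = int ((p - 1) * b1) + int b1"
  using p_b1_eq by (metis of_nat_add)

lemma int_M_ge: "int ((p - 1) * b1) + int b1 + int q \<le> int M"
  using p_b1_q_le_M p_b1_eq by linarith

lemma int_j_b1_le: "j \<le> p - 1 \<Longrightarrow> int (j * b1) \<le> int ((p - 1) * b1)"
  by (simp only: of_nat_le_iff mult_le_mono1)

lemma W_index_le_k:
  assumes "1 \<le> j" "c \<le> b2"
  shows "(p - j) * b2 + q + c \<le> k"
proof -
  have "(p - j) * b2 \<le> (p - 1) * b2"
    using assms(1) by (intro mult_le_mono1) simp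
  then show ?thesis
    using assms p_b2_eq by linarith
qed

lemma b2_modn_le_k: "b2 + modn l q \<le> k"
proof -
  have "modn l q \<le> q"
    using modn_bounds[of q l] q_pos by simp
  then show ?thesis
    using b2_q_le_k by linarith
qed

definition comb_sum :: "msgs \<Rightarrow> nat \<Rightarrow> int \<Rightarrow> bit" where
  "comb_sum D c t =
     (\<Sum>l \<in> {l \<in> {1..b1 - 1}. q + modn l (b1 - q) = c}. D (t - int l) (b2 + modn l q))"

lemma SR_m_eq:
  "SR_m b1 b2 q D i t =
     (if q < b1 \<and> b2 + q < i \<and> i \<le> 2 * b2 + q then comb_sum D (i - b2 - q) t else 0)"
  unfolding SR_m_def comb_sum_def by simp

definition parity_support :: "nat \<Rightarrow> (nat \<times> nat) set" where
  "parity_support c =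
     (\<lambda>j. (j * b1, (p - j) * b2 + q + c)) ` {1..p - 1}
   \<union> (\<lambda>l. ((p - 1) * b1 + l, b2 + modn l q)) ` {l \<in> {1..b1 - 1}. q < b1 \<and> q + modn l (b1 - q) = c}
   \<union> (if c \<le> q then {(p * b1, b2 + c)} else {})
   \<union> {(p * b1 + q, c)}"

definition parity_expansion :: "msgs \<Rightarrow> int \<Rightarrow> nat \<Rightarrow> bit" where
  "parity_expansion D \<tau> c =
     (\<Sum>j \<in> {1..p - 1}. D (\<tau> - int (j * b1)) ((p - j) * b2 + q + c))
   + (if q < b1 then comb_sum D c (\<tau> - int ((p - 1) * b1)) else 0)
   + (if c \<le> q then D (\<tau> - int (p * b1)) (b2 + c) else 0)
   + D (\<tau> - int (p * b1 + q)) c"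

lemma SR_P_eq_1_iff:
  assumes "1 \<le> c" "c \<le> b2"
  shows "SR_P b1 b2 p q i r c = 1 \<longleftrightarrow> (i, r) \<in> parity_support c"
  using assms unfolding SR_P_def parity_support_def by (auto simp: image_iff)

lemma parity_support_subset:
  assumes "1 \<le> c" "c \<le> b2"
  shows "parity_support c \<subseteq> {0..M} \<times> {1..k}"
proof -
  have "j * b1 \<le> M" if "j \<le> p - 1" for j
  proof -
    have "j * b1 \<le> (p - 1) * b2"
      using that b1_less_b2 by (intro mult_le_mono) auto
    then show ?thesis
      by linarith
  qed
  moreover have "(p - 1) * b1 + l \<le> M" if "l \<le> b1 - 1" for l
    using that p_b1_q_le_M p_b1_eq by linarith
  moreover have "b2 + c \<le> k" if "c \<le> q"
    using that b2_q_le_k by linarith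
  moreover have "c \<le> k"
    using assms b2_q_le_k by linarith
  ultimately show ?thesis
    using assms p_b1_q_le_M W_index_le_k b2_modn_le_k unfolding parity_support_def by auto
qed

lemma sum_parity_support:
  fixes g :: "nat \<Rightarrow> nat \<Rightarrow> 'a::comm_monoid_add"
  shows "(\<Sum>(i, r) \<in> parity_support c. g i r) =
      (\<Sum>j \<in> {1..p - 1}. g (j * b1) ((p - j) * b2 + q + c))
    + (\<Sum>l \<in> {l \<in> {1..b1 - 1}. q < b1 \<and> q + modn l (b1 - q) = c}. g ((p - 1) * b1 + l) (b2 + modn l q))
    + (if c \<le> q then g (p * b1) (b2 + c) else 0)
    + g (p * b1 + q) c"
proof -
  define L where "L = {l \<in> {1..b1 - 1}. q < b1 \<and> q + modn l (b1 - q) = c}"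
  define F1 where "F1 = (\<lambda>j. (j * b1, (p - j) * b2 + q + c)) ` {1..p - 1}"
  define F2 where "F2 = (\<lambda>l. ((p - 1) * b1 + l, b2 + modn l q)) ` L"
  define F3 where "F3 = (if c \<le> q then {(p * b1, b2 + c)} else {})"
  define F4 where "F4 = {(p * b1 + q, c)}"
  have fst_F1: "fst x \<le> (p - 1) * b1" if "x \<in> F1" for x
    using that unfolding F1_def by auto
  have fst_F2: "(p - 1) * b1 < fst x \<and> fst x < p * b1" if "x \<in> F2" for x
    using that p_b1_eq unfolding F2_def L_def by auto
  have fst_F12: "fst x < p * b1" if "x \<in> F1 \<union> F2" for x
    using that fst_F1 fst_F2 p_b1_eq b1_pos by fastforce
  have fst_F3: "fst x = p * b1" if "x \<in> F3" for x
    using that unfolding F3_def by (auto split: if_splits)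
  have "F1 \<inter> F2 = {}"
    using fst_F1 fst_F2 by (meson disjoint_iff not_le)
  moreover have "(F1 \<union> F2) \<inter> F3 = {}"
    using fst_F12 fst_F3 by (metis disjoint_iff less_irrefl)
  moreover have "fst x \<noteq> p * b1 + q" if "x \<in> F1 \<union> F2 \<union> F3" for x
    using that fst_F12[of x] fst_F3[of x] q_pos by auto
  then have "(F1 \<union> F2 \<union> F3) \<inter> F4 = {}"
    unfolding F4_def by (metis disjoint_iff fst_conv singletonD)
  moreover have "finite F1" "finite F2" "finite F3" "finite F4"
    unfolding F1_def F2_def F3_def F4_def L_def by auto
  ultimately have "(\<Sum>(i, r) \<in> F1 \<union> F2 \<union> F3 \<union> F4. g i r) =
      (\<Sum>(i, r) \<in> F1. g i r) + (\<Sum>(i, r) \<in> F2. g i r) + (\<Sum>(i, r) \<in> F3. g i r) + (\<Sum>(i, r) \<in> F4. g i r)"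
    by (simp add: sum.union_disjoint)
  moreover have "(\<Sum>(i, r) \<in> F1. g i r) = (\<Sum>j \<in> {1..p - 1}. g (j * b1) ((p - j) * b2 + q + c))"
    unfolding F1_def using b1_pos by (subst sum.reindex) (auto simp: inj_on_def)
  moreover have "(\<Sum>(i, r) \<in> F2. g i r) = (\<Sum>l \<in> L. g ((p - 1) * b1 + l) (b2 + modn l q))"
    unfolding F2_def by (subst sum.reindex) (auto simp: inj_on_def)
  moreover have "parity_support c = F1 \<union> F2 \<union> F3 \<union> F4"
    unfolding parity_support_def F1_def F2_def F3_def F4_def L_def ..
  ultimately show ?thesis
    unfolding F3_def F4_def L_def by simp
qed

lemma parity_eq_expansion:
  assumes c: "1 \<le> c" "c \<le> b2"
  shows "parity (SR_P b1 b2 p q) M k D \<tau> c = parity_expansion D \<tau> c"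
proof -
  have "{(i, r) \<in> {0..M} \<times> {1..k}. SR_P b1 b2 p q i r c = 1} = parity_support c"
    using parity_support_subset[OF c] by (auto simp: SR_P_eq_1_iff[OF c])
  then have "parity (SR_P b1 b2 p q) M k D \<tau> c = (\<Sum>(i, r) \<in> parity_support c. D (\<tau> - int i) r)"
    unfolding parity_eq_sum_support by (simp only:)
  moreover have "(\<Sum>l \<in> {l \<in> {1..b1 - 1}. q < b1 \<and> q + modn l (b1 - q) = c}.
        D (\<tau> - int ((p - 1) * b1 + l)) (b2 + modn l q))
      = (if q < b1 then comb_sum D c (\<tau> - int ((p - 1) * b1)) else 0)"
    by (cases "q < b1") (simp_all add: comb_sum_def algebra_simps)
  ultimately show ?thesis
    unfolding parity_expansion_def by (simp only: sum_parity_support[of "\<lambda>i r. D (\<tau> - int i) r"])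
qed

lemma comb_sum_zero:
  assumes "\<And>l. l \<in> {1..b1 - 1} \<Longrightarrow> q + modn l (b1 - q) = c \<Longrightarrow> D (t - int l) (b2 + modn l q) = 0"
  shows "comb_sum D c t = 0"
  unfolding comb_sum_def using assms by (intro sum.neutral) auto

lemma comb_sum_le_q:
  assumes "q < b1" "c \<le> q"
  shows "comb_sum D c t = 0"
proof (rule comb_sum_zero)
  fix l
  have "1 \<le> modn l (b1 - q)"
    using modn_bounds[of "b1 - q" l] assms(1) by simp
  then show "q + modn l (b1 - q) = c \<Longrightarrow> D (t - int l) (b2 + modn l q) = 0"
    using assms(2) by simp
qed

lemma comb_sum_eq_single:
  assumes "l0 \<in> {1..b1 - 1}" "q + modn l0 (b1 - q) = c"
    and "\<And>l. l \<in> {1..b1 - 1} \<Longrightarrow> q + modn l (b1 - q) = c \<Longrightarrow> l \<noteq> l0 \<Longrightarrow>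
           D (t - int l) (b2 + modn l q) = 0"
  shows "comb_sum D c t = D (t - int l0) (b2 + modn l0 q)"
proof -
  let ?L = "{l \<in> {1..b1 - 1}. q + modn l (b1 - q) = c}"
  have "comb_sum D c t = D (t - int l0) (b2 + modn l0 q) + (\<Sum>l \<in> ?L - {l0}. D (t - int l) (b2 + modn l q))"
    unfolding comb_sum_def using assms(1,2) by (subst sum.remove) auto
  also have "(\<Sum>l \<in> ?L - {l0}. D (t - int l) (b2 + modn l q)) = 0"
    using assms(3) by (intro sum.neutral) auto
  finally show ?thesis
    by simp
qed

lemma SR_m_lin_comb:
  assumes "{b2 + 1..b2 + q} \<subseteq> A" "finite A"
  shows "lin_comb_of (\<lambda>S. SR_m b1 b2 q S i t) A t"
proof (cases "q < b1 \<and> b2 + q < i \<and> i \<le> 2 * b2 + q")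
  case True
  let ?L = "{l \<in> {1..b1 - 1}. q + modn l (b1 - q) = i - b2 - q}"
  show ?thesis
  proof (rule lin_comb_of_shift_sum[where L = ?L and \<iota> = "\<lambda>l. b2 + modn l q", OF assms(2)])
    show "0 < l \<and> b2 + modn l q \<in> A" if "l \<in> ?L" for l
      using that assms(1) modn_bounds[of q l] q_pos by auto
    show "SR_m b1 b2 q S i t = (\<Sum>l \<in> ?L. S (t - int l) (b2 + modn l q))" for S
      using True by (simp only: SR_m_eq comb_sum_def if_P)
  qed simp
next
  case False
  then have "(\<lambda>S. SR_m b1 b2 q S i t) = (\<lambda>S. 0)"
    by (simp only: SR_m_eq if_not_P if_False)
  then show ?thesis
    using lin_comb_of_zero by simp
qed

lemma W_index_decomp:
  assumes i: "b2 + q < i" "i \<le> k"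
  obtains j c where "1 \<le> j" "j \<le> p - 1" "1 \<le> c" "c \<le> b2" "i = (p - j) * b2 + q + c"
    "SR_delay b1 b2 p q i = j * b1"
    "\<And>D t. SR_m b1 b2 q D i t = (if j = p - 1 \<and> q < b1 then comb_sum D c t else 0)"
proof -
  define g where "g = (i - b2 - q - 1) div b2"
  define c where "c = (i - b2 - q - 1) mod b2 + 1"
  define j where "j = p - g - 1"
  have b2_pos: "0 < b2"
    using b1_less_b2 by simp
  have i_eq: "i = g * b2 + c + b2 + q"
    using i unfolding g_def c_def by simp
  have c: "1 \<le> c" "c \<le> b2"
    unfolding c_def using b2_pos by (auto simp: Suc_le_eq)
  have "i - b2 - q - 1 < (p - 1) * b2"
    using i p_b2_eq by linarith
  then have g_less: "g < p - 1"
    unfolding g_def by (simp add: less_mult_imp_div_less)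
  have j: "1 \<le> j" "j \<le> p - 1" and p_j: "p - j = g + 1"
    unfolding j_def using g_less by auto
  have "i = (p - j) * b2 + q + c"
    unfolding p_j using i_eq by (simp add: algebra_simps)
  moreover have "SR_delay b1 b2 p q i = j * b1"
    unfolding SR_delay_def j_def g_def using i by simp
  moreover have "j = p - 1 \<longleftrightarrow> g = 0" "i \<le> 2 * b2 + q \<longleftrightarrow> g = 0"
    using i_eq c b2_pos g_less unfolding j_def by (auto, cases g, auto)
  then have "SR_m b1 b2 q D i t = (if j = p - 1 \<and> q < b1 then comb_sum D c t else 0)" for D t
    using i i_eq unfolding SR_m_eq by auto
  ultimately show ?thesis
    using that j c by blast
qed

end

locale burst_window = SR_code +
  fixes D :: msgs and a H :: int
  assumes zero_outside_burst: "\<And>\<tau> j. a - int M \<le> \<tau> \<Longrightarrow> \<tau> \<le> H \<Longrightarrow> \<tau> < a \<or> a + int b1 \<le> \<tau> \<Longrightarrow>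
      1 \<le> j \<Longrightarrow> j \<le> k \<Longrightarrow> D \<tau> j = 0"
    and parity_zero_after_burst: "\<And>\<tau> c. a + int b1 \<le> \<tau> \<Longrightarrow> \<tau> \<le> H \<Longrightarrow>
      1 \<le> c \<Longrightarrow> c \<le> b2 \<Longrightarrow> parity_expansion D \<tau> c = 0"
begin

lemma W_sum_zero_after_burst:
  assumes "c \<le> b2" "a + int b1 \<le> \<tau> - int ((p - 1) * b1)" "\<tau> - int b1 \<le> H"
  shows "(\<Sum>j \<in> {1..p - 1}. D (\<tau> - int (j * b1)) ((p - j) * b2 + q + c)) = 0"
proof (intro sum.neutral ballI)
  fix j assume j: "j \<in> {1..p - 1}"
  then have "int b1 \<le> int (j * b1)" "int (j * b1) \<le> int ((p - 1) * b1)"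
    using int_le_int_mult[of j b1] int_j_b1_le[of j] by auto
  moreover have "1 \<le> (p - j) * b2 + q + c" "(p - j) * b2 + q + c \<le> k"
    using j assms(1) W_index_le_k[of j c] q_pos by auto
  ultimately show "D (\<tau> - int (j * b1)) ((p - j) * b2 + q + c) = 0"
    using assms(2,3) by (intro zero_outside_burst) linarith+
qed

lemma comb_sum_zero_before_burst:
  assumes "a - int M + int b1 \<le> s" "s \<le> a" "s \<le> H"
  shows "comb_sum D c s = 0"
proof (rule comb_sum_zero)
  fix l assume "l \<in> {1..b1 - 1}"
  then have "1 \<le> int l" "int l < int b1"
    by auto
  moreover have "1 \<le> modn l q"
    using modn_bounds[of q l] q_pos by simp
  ultimately show "D (s - int l) (b2 + modn l q) = 0"
    using assms b2_modn_le_k[of l] by (intro zero_outside_burst) linarith+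
qed

lemma V_zero_early:
  assumes x: "a \<le> x" "x < a + int q" "x + int (p * b1) \<le> H" and r: "1 \<le> r" "r \<le> q"
  shows "D x (b2 + r) = 0"
proof -
  define \<tau> where "\<tau> = x + int (p * b1)"
  have r_le: "r \<le> b2"
    using r q_less_b2 by simp
  have "parity_expansion D \<tau> r = 0"
    by (rule parity_zero_after_burst) (use x r r_le int_p_b1 in \<open>unfold \<tau>_def, linarith+\<close>)
  moreover have "(\<Sum>j \<in> {1..p - 1}. D (\<tau> - int (j * b1)) ((p - j) * b2 + q + r)) = 0"
    by (rule W_sum_zero_after_burst) (use x r_le int_p_b1 in \<open>unfold \<tau>_def, linarith+\<close>)
  moreover have "q < b1 \<Longrightarrow> comb_sum D r (\<tau> - int ((p - 1) * b1)) = 0"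
    using comb_sum_le_q r by simp
  moreover have "D (\<tau> - int (p * b1 + q)) r = 0"
    by (rule zero_outside_burst) (use x r r_le int_M_ge int_p_b1 b2_q_le_k in \<open>unfold \<tau>_def, linarith+\<close>)
  ultimately show ?thesis
    using r unfolding parity_expansion_def \<tau>_def by (simp split: if_splits)
qed

(* The other summands (l = l0 mod (b1 - q), l <> l0) sit at times x + l0 - l at least b1 - q
   away from x: for l < l0 after the burst, for l > l0 before a + q, where V_zero_early
   applies. *)
lemma comb_sum_eq_V_symbol:
  assumes x: "a + int q \<le> x" "x < a + int b1" and H: "a + int (p * b1) + int q \<le> H"
    and l0: "l0 \<in> {1..b1 - 1}" "a + int b1 \<le> x + int l0" "x + int l0 < a + int b1 + int q"
  shows "comb_sum D (q + modn l0 (b1 - q)) (x + int l0) = D x (b2 + modn l0 q)"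
proof -
  have q_less_b1: "q < b1"
    using x by linarith
  have "D (x + int l0 - int l) (b2 + modn l q) = 0"
    if l: "l \<in> {1..b1 - 1}" "modn l (b1 - q) = modn l0 (b1 - q)" "l \<noteq> l0" for l
  proof -
    have l_mod: "l mod (b1 - q) = l0 mod (b1 - q)"
      using l(2) q_less_b1 by (intro modn_eq_modn_imp_mod_eq) auto
    have r: "1 \<le> modn l q" "modn l q \<le> q" "int l < int b1"
      using modn_bounds[of q l] q_pos l(1) by auto
    show ?thesis
    proof (cases "l < l0")
      case True
      then have "l + (b1 - q) \<le> l0"
        using l_mod by (intro mod_eq_less_imp_add_le)
      then show ?thesis
        using x l0 H q_less_b1 r b2_modn_le_k int_p_b1 by (intro zero_outside_burst) linarith+
    next
      case False
      then have "l0 + (b1 - q) \<le> l"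
        using l(3) l_mod by (intro mod_eq_less_imp_add_le) auto
      then have early: "x + int l0 - int l < a + int q" "x + int l0 - int l + int (p * b1) \<le> H"
        using x H q_less_b1 int_p_b1 by linarith+
      show ?thesis
      proof (cases "x + int l0 - int l < a")
        case True
        then show ?thesis
          using x early int_M_ge r b2_modn_le_k[of l] by (intro zero_outside_burst) linarith+
      next
        case False
        then show ?thesis
          using early r by (intro V_zero_early) auto
      qed
    qed
  qed
  then show ?thesis
    using l0(1) by (subst comb_sum_eq_single[of l0]) auto
qed

lemma V_zero_late:
  assumes x: "a + int q \<le> x" "x < a + int b1" and H: "a + int (p * b1) + int q \<le> H"
    and r: "1 \<le> r" "r \<le> q"
  shows "D x (b2 + r) = 0"
proof -
  have q_less_b1: "q < b1"
    using x by linarith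
  define d where "d = nat (a + int b1 - x)"
  have d: "int d = a + int b1 - x"
    using x unfolding d_def by simp
  \<comment> \<open>the shift l0 moves x just past the burst, and P_{(p-1) b1 + l0} carries s_{b2+r}\<close>
  obtain l0 where l0: "d \<le> l0" "l0 < d + q" "l0 mod q = r mod q"
    using ex_mod_eq_in_interval[of q d r] q_pos by auto
  have l0_range: "a + int b1 \<le> x + int l0" "x + int l0 < a + int b1 + int q"
    using l0 d by linarith+
  have l0_mem: "l0 \<in> {1..b1 - 1}"
    using l0_range x by auto
  have "modn l0 q = r"
    using l0(3) r by (intro modn_eqI) auto
  define c where "c = q + modn l0 (b1 - q)"
  have c: "q < c" "c \<le> b1"
    using modn_bounds[of "b1 - q" l0] q_less_b1 unfolding c_def by auto
  then have c_le: "1 \<le> c" "c \<le> b2"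
    using b1_less_b2 by auto
  define \<tau> where "\<tau> = x + int l0 + int ((p - 1) * b1)"
  have \<tau>_H: "\<tau> \<le> H"
    using l0_range H int_p_b1 unfolding \<tau>_def by linarith
  have "parity_expansion D \<tau> c = 0"
    by (rule parity_zero_after_burst) (use c_le \<tau>_H l0_range in \<open>unfold \<tau>_def, linarith+\<close>)
  moreover have "(\<Sum>j \<in> {1..p - 1}. D (\<tau> - int (j * b1)) ((p - j) * b2 + q + c)) = 0"
    by (rule W_sum_zero_after_burst) (use c_le l0_range \<tau>_H in \<open>unfold \<tau>_def, linarith+\<close>)
  moreover have "comb_sum D c (\<tau> - int ((p - 1) * b1)) = D x (b2 + r)"
    using comb_sum_eq_V_symbol[OF x H l0_mem l0_range] \<open>modn l0 q = r\<close>
    unfolding \<tau>_def c_def by simp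
  moreover have "D (\<tau> - int (p * b1 + q)) c = 0"
    by (rule zero_outside_burst)
      (use l0_range x \<tau>_H int_p_b1 int_M_ge c_le b2_q_le_k in \<open>unfold \<tau>_def, linarith+\<close>)
  ultimately show ?thesis
    using c q_less_b1 unfolding parity_expansion_def by simp
qed

lemma V_zero_after:
  assumes "a + int q \<le> z" "z \<le> H" "a + int (p * b1) + int q \<le> H" "1 \<le> r" "r \<le> q"
  shows "D z (b2 + r) = 0"
proof (cases "z < a + int b1")
  case True
  then show ?thesis
    using assms by (intro V_zero_late) auto
next
  case False
  then show ?thesis
    using assms b2_q_le_k by (intro zero_outside_burst) linarith+
qed

lemma U_zero:
  assumes y: "a \<le> y" "y < a + int b1" "y + int (p * b1) + int q \<le> H" and c: "1 \<le> c" "c \<le> b2"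
  shows "D y c = 0"
proof -
  define \<tau> where "\<tau> = y + int (p * b1) + int q"
  have H: "a + int (p * b1) + int q \<le> H"
    using y by linarith
  have "parity_expansion D \<tau> c = 0"
    by (rule parity_zero_after_burst) (use y c int_p_b1 in \<open>unfold \<tau>_def, linarith+\<close>)
  moreover have "(\<Sum>j \<in> {1..p - 1}. D (\<tau> - int (j * b1)) ((p - j) * b2 + q + c)) = 0"
    by (rule W_sum_zero_after_burst) (use y c int_p_b1 in \<open>unfold \<tau>_def, linarith+\<close>)
  moreover have "comb_sum D c (\<tau> - int ((p - 1) * b1)) = 0"
  proof (rule comb_sum_zero)
    fix l assume "l \<in> {1..b1 - 1}"
    then have "int l < int b1" "1 \<le> int l"
      by auto
    moreover have "1 \<le> modn l q" "modn l q \<le> q"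
      using modn_bounds[of q l] q_pos by auto
    ultimately show "D (\<tau> - int ((p - 1) * b1) - int l) (b2 + modn l q) = 0"
      using y H int_p_b1 unfolding \<tau>_def by (intro V_zero_after) linarith+
  qed
  moreover have "D (\<tau> - int (p * b1)) (b2 + c) = 0" if "c \<le> q"
    using y H c that unfolding \<tau>_def by (intro V_zero_after) linarith+
  ultimately show ?thesis
    unfolding parity_expansion_def \<tau>_def by (simp split: if_splits)
qed

lemma W_sum_single:
  assumes j: "j \<in> {1..p - 1}" and t: "a \<le> t" "t < a + int b1" "t + int (j * b1) \<le> H"
    and c: "1 \<le> c" "c \<le> b2"
  shows "(\<Sum>j' \<in> {1..p - 1}. D (t + int (j * b1) - int (j' * b1)) ((p - j') * b2 + q + c)) =
    D t ((p - j) * b2 + q + c)"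
proof -
  have "D (t + int (j * b1) - int (j' * b1)) ((p - j') * b2 + q + c) = 0"
    if j': "j' \<in> {1..p - 1} - {j}" for j'
  proof (rule zero_outside_burst)
    have "j' < j \<or> j < j'"
      using j' by auto
    then show "t + int (j * b1) - int (j' * b1) < a \<or> a + int b1 \<le> t + int (j * b1) - int (j' * b1)"
      using t int_mult_less_gap[of j' j b1] int_mult_less_gap[of j j' b1] by linarith
    have "int (j' * b1) \<le> int ((p - 1) * b1)"
      using j' by (intro int_j_b1_le) auto
    then show "a - int M \<le> t + int (j * b1) - int (j' * b1)" "t + int (j * b1) - int (j' * b1) \<le> H"
      using t int_M_ge by linarith+
    show "1 \<le> (p - j') * b2 + q + c" "(p - j') * b2 + q + c \<le> k"
      using j' c W_index_le_k[of j' c] by auto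
  qed
  then show ?thesis
    using j by (subst sum.remove[of _ j]) auto
qed

lemma W_zero:
  assumes j: "1 \<le> j" "j \<le> p - 1" and t: "a \<le> t" "t < a + int b1" "t + int (j * b1) \<le> H"
    and c: "1 \<le> c" "c \<le> b2"
  shows "D t ((p - j) * b2 + q + c) + (if j = p - 1 \<and> q < b1 then comb_sum D c t else 0) = 0"
proof -
  define \<tau> where "\<tau> = t + int (j * b1)"
  have j_b1: "int b1 \<le> int (j * b1)" "int (j * b1) \<le> int ((p - 1) * b1)"
    using int_le_int_mult[OF j(1)] int_j_b1_le[OF j(2)] .
  have "parity_expansion D \<tau> c = 0"
    by (rule parity_zero_after_burst) (use t c j_b1 in \<open>unfold \<tau>_def, linarith+\<close>)
  moreover have "(\<Sum>j' \<in> {1..p - 1}. D (\<tau> - int (j' * b1)) ((p - j') * b2 + q + c)) =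
      D t ((p - j) * b2 + q + c)"
    unfolding \<tau>_def using j t c by (intro W_sum_single) auto
  moreover have "(if q < b1 then comb_sum D c (\<tau> - int ((p - 1) * b1)) else 0) =
      (if j = p - 1 \<and> q < b1 then comb_sum D c t else 0)"
  proof (cases "j = p - 1")
    case True
    then show ?thesis
      unfolding \<tau>_def by simp
  next
    case False
    then have "int (j * b1) + int b1 \<le> int ((p - 1) * b1)"
      using j int_mult_less_gap[of j "p - 1" b1] by simp
    then have "comb_sum D c (\<tau> - int ((p - 1) * b1)) = 0"
      using t int_M_ge unfolding \<tau>_def by (intro comb_sum_zero_before_burst) linarith+
    then show ?thesis
      using False by simp
  qed
  moreover have "D (\<tau> - int (p * b1)) (b2 + c) = 0" if "c \<le> q"
    using t c that int_p_b1 int_M_ge j_b1 b2_q_le_k unfolding \<tau>_def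
    by (intro zero_outside_burst) linarith+
  moreover have "D (\<tau> - int (p * b1 + q)) c = 0"
    using t c int_p_b1 int_M_ge j_b1 b2_q_le_k unfolding \<tau>_def
    by (intro zero_outside_burst) linarith+
  ultimately show ?thesis
    unfolding parity_expansion_def by (simp split: if_splits)
qed

lemma comb_sum_zero_after_burst:
  assumes "q < b1" and t: "a + int b1 \<le> t" "t + int ((p - 1) * b1) \<le> H" and c: "q < c" "c \<le> b2"
  shows "comb_sum D c t = 0"
proof -
  define \<tau> where "\<tau> = t + int ((p - 1) * b1)"
  have c1: "1 \<le> c"
    using c q_pos by simp
  have "parity_expansion D \<tau> c = 0"
    by (rule parity_zero_after_burst) (use t c1 c in \<open>unfold \<tau>_def, linarith+\<close>)
  moreover have "(\<Sum>j \<in> {1..p - 1}. D (\<tau> - int (j * b1)) ((p - j) * b2 + q + c)) = 0"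
    by (rule W_sum_zero_after_burst) (use t c int_M_ge in \<open>unfold \<tau>_def, linarith+\<close>)
  moreover have "D (\<tau> - int (p * b1 + q)) c = 0"
  proof -
    have \<tau>_shift: "\<tau> - int (p * b1 + q) = t - int b1 - int q"
      using int_p_b1 unfolding \<tau>_def by simp
    show ?thesis
    proof (cases "a \<le> t - int b1 - int q \<and> t - int b1 - int q < a + int b1")
      case True
      then show ?thesis
        unfolding \<tau>_shift using t c1 c int_p_b1 by (intro U_zero) linarith+
    next
      case False
      then show ?thesis
        unfolding \<tau>_shift using t c1 c int_M_ge b2_q_le_k by (intro zero_outside_burst) linarith+
    qed
  qed
  ultimately show ?thesis
    using assms unfolding parity_expansion_def \<tau>_def by simp
qed

end

(* D stands for the difference S - S' of two message sequences, which vanishes on every symbol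
   and parity received up to the deadline H. *)
locale erased_difference = SR_code +
  fixes E :: "int set" and D :: msgs and H :: int
  assumes admissible: "burst_admissible b1 M E" and zero_neg_D: "zero_neg D"
    and received_zero: "\<And>\<tau> j. \<tau> \<in> {0..H} - E \<Longrightarrow> 1 \<le> j \<Longrightarrow> j \<le> k \<Longrightarrow> D \<tau> j = 0"
    and received_parity_zero:
      "\<And>\<tau> c. \<tau> \<in> {0..H} - E \<Longrightarrow> 1 \<le> c \<Longrightarrow> c \<le> b2 \<Longrightarrow> parity_expansion D \<tau> c = 0"
begin

lemma zero_if_not_erased:
  assumes "\<tau> \<le> H" "\<tau> \<notin> E" "1 \<le> j" "j \<le> k"
  shows "D \<tau> j = 0"
proof (cases "\<tau> < 0")
  case True
  then show ?thesis
    using zero_neg_D unfolding zero_neg_def by simp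
next
  case False
  then show ?thesis
    using assms by (intro received_zero) auto
qed

lemma burst_window_around:
  assumes x: "x \<in> E" "0 \<le> x" "H - x \<le> int M"
  obtains a where "a \<le> x" "x < a + int b1" "burst_window b1 b2 p q D a H"
proof -
  obtain a where a: "a \<le> x" "x < a + int b1"
    and burst: "\<And>y. y \<in> E \<Longrightarrow> a - int M \<le> y \<Longrightarrow> y \<le> H \<Longrightarrow> a \<le> y \<and> y < a + int b1"
    using burst_start_exists[OF admissible _ x(1,3)] by auto
  have "burst_window b1 b2 p q D a H"
  proof unfold_locales
    fix \<tau> j
    assume "a - int M \<le> \<tau>" "\<tau> \<le> H" "\<tau> < a \<or> a + int b1 \<le> \<tau>" "1 \<le> j" "j \<le> k"
    then show "D \<tau> j = 0"
      using burst[of \<tau>] by (intro zero_if_not_erased) auto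
  next
    fix \<tau> c
    assume "a + int b1 \<le> \<tau>" "\<tau> \<le> H" "1 \<le> c" "c \<le> b2"
    moreover have "\<tau> \<notin> E"
      using burst[of \<tau>] \<open>a + int b1 \<le> \<tau>\<close> \<open>\<tau> \<le> H\<close> by fastforce
    ultimately show "parity_expansion D \<tau> c = 0"
      using a x(2) by (intro received_parity_zero) auto
  qed
  then show ?thesis
    using that a by blast
qed

lemma decode_U:
  assumes "1 \<le> i" "i \<le> b2" "0 \<le> t" "H = t + int (p * b1 + q)"
  shows "D t i = 0"
proof (cases "t \<in> E")
  case True
  moreover have "int (p * b1 + q) \<le> int M"
    using p_b1_q_le_M by (simp only: of_nat_le_iff)
  then have "H - t \<le> int M"
    using assms(4) by linarith
  ultimately obtain a where "a \<le> t" "t < a + int b1" "burst_window b1 b2 p q D a H"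
    using burst_window_around assms(3) by blast
  then show ?thesis
    using assms by (intro burst_window.U_zero) auto
next
  case False
  then show ?thesis
    using assms le_b2_q_imp_le_k by (intro zero_if_not_erased) auto
qed

lemma decode_V:
  assumes "b2 < i" "i \<le> b2 + q" "0 \<le> t" "H = t + int (p * b1)"
  shows "D t i = 0"
proof (cases "t \<in> E")
  case True
  moreover have "H - t \<le> int M"
    using assms(4) int_p_b1 int_M_ge by linarith
  ultimately obtain a where a: "a \<le> t" "t < a + int b1" "burst_window b1 b2 p q D a H"
    using burst_window_around assms(3) by blast
  have i: "i = b2 + (i - b2)" "1 \<le> i - b2" "i - b2 \<le> q"
    using assms(1,2) by auto
  show ?thesis
  proof (cases "t < a + int q")
    case True
    then show ?thesis
      using a i assms(4) by (subst i(1), intro burst_window.V_zero_early) auto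
  next
    case False
    then show ?thesis
      using a i assms(4) by (subst i(1), intro burst_window.V_zero_late) auto
  qed
next
  case False
  then show ?thesis
    using assms le_b2_q_imp_le_k by (intro zero_if_not_erased) auto
qed

lemma comb_sum_zero_if_received:
  assumes "t \<le> H" "\<And>l. l \<in> {1..b1 - 1} \<Longrightarrow> 0 \<le> t - int l \<Longrightarrow> t - int l \<notin> E"
  shows "comb_sum D c t = 0"
proof (rule comb_sum_zero)
  fix l assume l: "l \<in> {1..b1 - 1}"
  show "D (t - int l) (b2 + modn l q) = 0"
  proof (cases "t - int l < 0")
    case True
    then show ?thesis
      using zero_neg_D unfolding zero_neg_def by simp
  next
    case False
    moreover have "1 \<le> b2 + modn l q"
      using b1_less_b2 by simp
    ultimately show ?thesis
      using assms l b2_modn_le_k[of l] by (intro zero_if_not_erased) auto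
  qed
qed

lemma comb_sum_zero_received:
  assumes "2 \<le> p" "q < b1" "t \<notin> E" "0 \<le> t" "H = t + int ((p - 1) * b1)" "1 \<le> c" "c \<le> b2"
  shows "comb_sum D c t = 0"
proof (cases "\<exists>x \<in> E. t - int b1 < x \<and> x < t \<and> 0 \<le> x")
  case True
  then obtain x where x: "x \<in> E" "t - int b1 < x" "x < t" "0 \<le> x"
    by blast
  have "H - x \<le> int M"
    using assms(5) x int_M_ge by linarith
  then obtain a where a: "a \<le> x" "x < a + int b1" and window: "burst_window b1 b2 p q D a H"
    using burst_window_around x(1,4) by blast
  show ?thesis
  proof (cases "t < a + int b1")
    case True
    have "D t ((p - (p - 1)) * b2 + q + c) = 0"
      using assms W_index_le_k[of "p - 1" c] by (intro zero_if_not_erased) auto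
    then show ?thesis
      using burst_window.W_zero[OF window, of "p - 1" t c] True a x assms by simp
  next
    case False
    then show ?thesis
      using burst_window.comb_sum_zero_after_burst[OF window] comb_sum_le_q assms
      by (cases "q < c") auto
  qed
next
  case False
  then show ?thesis
    using assms by (intro comb_sum_zero_if_received) force+
qed

lemma decode_W:
  assumes j: "1 \<le> j" "j \<le> p - 1" and c: "1 \<le> c" "c \<le> b2" and t: "0 \<le> t" "H = t + int (j * b1)"
  shows "D t ((p - j) * b2 + q + c) + (if j = p - 1 \<and> q < b1 then comb_sum D c t else 0) = 0"
proof (cases "t \<in> E")
  case True
  moreover have "H - t \<le> int M"
    using t(2) int_j_b1_le[OF j(2)] int_M_ge by linarith
  ultimately obtain a where "a \<le> t" "t < a + int b1" "burst_window b1 b2 p q D a H"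
    using burst_window_around t(1) by blast
  then show ?thesis
    using j c t by (intro burst_window.W_zero) auto
next
  case False
  have "D t ((p - j) * b2 + q + c) = 0"
    using False j c t W_index_le_k[of j c] by (intro zero_if_not_erased) auto
  moreover have "comb_sum D c t = 0" if "j = p - 1" "q < b1"
    using False j c t that by (intro comb_sum_zero_received) auto
  ultimately show ?thesis
    by simp
qed

lemma decode_combined_symbol:
  assumes i: "1 \<le> i" "i \<le> k" and t: "0 \<le> t" "H = t + int (SR_delay b1 b2 p q i)"
  shows "D t i + SR_m b1 b2 q D i t = 0"
proof -
  consider (U) "i \<le> b2" | (V) "b2 < i" "i \<le> b2 + q" | (W) "b2 + q < i"
    by linarith
  then show ?thesis
  proof cases
    case U
    then show ?thesis
      using i t decode_U unfolding SR_delay_def SR_m_eq by simp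
  next
    case V
    then show ?thesis
      using i t decode_V unfolding SR_delay_def SR_m_eq by simp
  next
    case W
    then obtain j c where "1 \<le> j" "j \<le> p - 1" "1 \<le> c" "c \<le> b2" "i = (p - j) * b2 + q + c"
      "SR_delay b1 b2 p q i = j * b1"
      "SR_m b1 b2 q D i t = (if j = p - 1 \<and> q < b1 then comb_sum D c t else 0)"
      using W_index_decomp i by metis
    then show ?thesis
      using decode_W t by simp
  qed
qed

end

context SR_code
begin

lemma erased_difference_of_agreement:
  assumes adm: "burst_admissible b1 M E" and S: "zero_neg S" "zero_neg S'"
    and agree: "\<forall>\<tau> \<in> {0..H} - E. (\<forall>j \<in> {1..k}. S \<tau> j = S' \<tau> j) \<and>
      (\<forall>c \<in> {1..b2}. parity (SR_P b1 b2 p q) M k S \<tau> c = parity (SR_P b1 b2 p q) M k S' \<tau> c)"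
  shows "erased_difference b1 b2 p q E (\<lambda>\<tau> j. S \<tau> j + S' \<tau> j) H"
proof unfold_locales
  show "zero_neg (\<lambda>\<tau> j. S \<tau> j + S' \<tau> j)"
    using S unfolding zero_neg_def by simp
  fix \<tau> j
  assume "\<tau> \<in> {0..H} - E" "1 \<le> j" "j \<le> k"
  then show "S \<tau> j + S' \<tau> j = 0"
    using agree by (simp add: bit_add_eq_0_iff)
next
  fix \<tau> c
  assume "\<tau> \<in> {0..H} - E" "1 \<le> c" "c \<le> b2"
  then show "parity_expansion (\<lambda>\<tau> j. S \<tau> j + S' \<tau> j) \<tau> c = 0"
    using agree parity_eq_expansion[symmetric] parity_add[of _ _ _ S S']
    by (simp add: bit_add_eq_0_iff)
qed (fact adm)

theorem SR_has_ext_delay_profile: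
  "has_ext_delay_profile (SR_P b1 b2 p q) M k b2 b1 (SR_delay b1 b2 p q) (SR_m b1 b2 q)"
  unfolding has_ext_delay_profile_def
proof (intro conjI allI impI ballI)
  fix i and t :: int
  show "lin_comb_of (\<lambda>S. SR_m b1 b2 q S i t) {1..k} t"
    using b2_q_le_k by (intro SR_m_lin_comb) auto
next
  fix E and t :: int and i S S'
  assume adm: "burst_admissible b1 M E" and t: "0 \<le> t" and i: "i \<in> {1..k}"
    and S: "zero_neg S" "zero_neg S'"
    and agree: "\<forall>\<tau> \<in> {0..t + int (SR_delay b1 b2 p q i)} - E.
      (\<forall>j \<in> {1..k}. S \<tau> j = S' \<tau> j) \<and>
      (\<forall>c \<in> {1..b2}. parity (SR_P b1 b2 p q) M k S \<tau> c = parity (SR_P b1 b2 p q) M k S' \<tau> c)"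
  interpret erased_difference b1 b2 p q E "\<lambda>\<tau> j. S \<tau> j + S' \<tau> j"
      "t + int (SR_delay b1 b2 p q i)"
    using adm S agree by (rule erased_difference_of_agreement)
  have "(S t i + S' t i) + SR_m b1 b2 q (\<lambda>\<tau> j. S \<tau> j + S' \<tau> j) i t = 0"
    using i t by (intro decode_combined_symbol) auto
  then have "(S t i + SR_m b1 b2 q S i t) + (S' t i + SR_m b1 b2 q S' i t) = 0"
    unfolding SR_m_add by (simp only: ac_simps)
  then show "S t i + SR_m b1 b2 q S i t = S' t i + SR_m b1 b2 q S' i t"
    by (simp only: bit_add_eq_0_iff)
qed

lemma V_indices_subset: "{b2 + 1..b2 + q} \<subseteq> {1..k} - ({b2 + q + 1..2 * b2 + q} \<inter> {1..k})"
proof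
  fix x assume "x \<in> {b2 + 1..b2 + q}"
  moreover from this have "x \<le> k"
    by (intro le_b2_q_imp_le_k) auto
  ultimately show "x \<in> {1..k} - ({b2 + q + 1..2 * b2 + q} \<inter> {1..k})"
    by auto
qed

theorem SR_ext_delay_separable:
  defines "A_D \<equiv> {b2 + q + 1..2 * b2 + q} \<inter> {1..k}"
  shows "ext_delay_separable k ({1..k} - A_D) A_D (SR_m b1 b2 q)"
  unfolding ext_delay_separable_def
proof (intro conjI ballI allI impI)
  fix i and t :: int and S
  assume "i \<in> {1..k} - A_D"
  then show "SR_m b1 b2 q S i t = 0"
    unfolding A_D_def SR_m_eq by auto
next
  fix i and t :: int
  show "lin_comb_of (\<lambda>S. SR_m b1 b2 q S i t) ({1..k} - A_D) t"
    using V_indices_subset unfolding A_D_def by (intro SR_m_lin_comb) auto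
qed (auto simp: A_D_def)

end

theorem mainTheorem7:
  fixes b1 b2 T p q :: nat
  assumes "0 < b1" and "b1 < b2" and "b1 + b2 \<le> T"
    and "T - b1 = p * b2 + q" and "1 \<le> p" and "1 \<le> q" and "q < b2"
  shows "has_ext_delay_profile (SR_P b1 b2 p q) (T - b2) (T - b1) b2 b1
            (SR_delay b1 b2 p q) (SR_m b1 b2 q)
       \<and> ext_delay_separable (T - b1)
            ({1..T - b1} - ({b2 + q + 1..2 * b2 + q} \<inter> {1..T - b1}))
            ({b2 + q + 1..2 * b2 + q} \<inter> {1..T - b1}) (SR_m b1 b2 q)
       \<and> {b2 + 1..b2 + q} \<subseteq> {1..T - b1} - ({b2 + q + 1..2 * b2 + q} \<inter> {1..T - b1})
       \<and> (\<forall>j\<in>{1..T - b1}. \<forall>t\<ge>0. lin_comb_of (\<lambda>S. SR_m b1 b2 q S j t) {b2 + 1..b2 + q} t)"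
proof -
  interpret SR_code b1 b2 p q
    using assms by unfold_locales auto
  have k: "T - b1 = k" and M: "T - b2 = M"
    using assms p_b2_eq by linarith+
  show ?thesis
    unfolding k M
    using SR_has_ext_delay_profile SR_ext_delay_separable V_indices_subset
      SR_m_lin_comb[OF order.refl]
    by auto
qed

end
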